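(* Let $m\ge1$ and let $\alpha\subseteq\langle 2m\rangle$ be a $2m$-element subset of weight zero, i.e. $\alpha=\{\bar\alpha_m,\dots,\bar\alpha_1,\alpha_1,\dots,\alpha_m\}$ with positive part $\alpha_+=\{\alpha_1<\dots<\alpha_m\}\subseteq[2m]$. If $\alpha$ is Northeast, then $\alpha_+\ge(2,4,\dots,2m)$ in $\binom{[2m]}{m}$, i.e. $\alpha_i\ge 2i$ for $i=1,\dots,m$. In particular $1\notin\alpha_+$ and $2m\in\alpha_+$.
   Context: $\langle 2m\rangle=\{\overline{2m}<\dots<\bar1<1<\dots<2m\}$ with $\bar\imath=-i$; $\binom{[2m]}{m}$ is ordered componentwise on increasing sequences. A $2m$-element subset of $\langle 2m\rangle$ corresponds to a partition in the $2m\times 2m$ square via the lattice path from the lower-left to the upper-right corner whose $j$-th step is upward if the $j$-th smallest element of $\langle 2m\rangle$ lies in the subset and rightward otherwise (the partition being the boxes between the path and the top and left edges). Such a partition $\lambda$ (boxes indexed (row from top, column from left)) is Northeast if for every box $(r,c)\in\lambda$ with $r>c$, the box $(c,r)$ also lies in $\lambda$. *)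

theory Defs
  imports Main
begin

text \<open>The signed alphabet <2m> = {-2m < ... < -1 < 1 < ... < 2m}, modelled inside int
  (the barred element i-bar is -i).\<close>
definition signed_alph :: "nat \<Rightarrow> int set" where
  "signed_alph m = {-(2 * int m)..-1} \<union> {1..2 * int m}"

definition pos_part :: "int set \<Rightarrow> int set" where
  "pos_part A = {x \<in> A. x > 0}"

definition weight_zero :: "int set \<Rightarrow> bool" where
  "weight_zero A \<longleftrightarrow> (\<forall>x\<in>A. -x \<in> A)"

text \<open>Box (r,c) (row from top, column from left, 1-based) of the partition in the
  2m x 2m square associated with the subset A of <2m>.  The lattice path goes up at
  its j-th step iff the j-th smallest element of <2m> lies in A, and right otherwise.
  The c-th right step is the step for the c-th smallest element y of <2m> \ A, and it
  runs at height h = #{x in A. x < y}.  The box (r,c) lies between the path and the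
  top/left edges iff its bottom edge, at height 2m - r, is at or above h.\<close>
definition in_partition :: "nat \<Rightarrow> int set \<Rightarrow> nat \<times> nat \<Rightarrow> bool" where
  "in_partition m A rc = (case rc of (r, c) \<Rightarrow>
     1 \<le> r \<and> r \<le> 2 * m \<and> 1 \<le> c \<and> c \<le> 2 * m \<and>
     r + card {x \<in> A. x < sorted_list_of_set (signed_alph m - A) ! (c - 1)} \<le> 2 * m)"

definition northeast :: "nat \<Rightarrow> int set \<Rightarrow> bool" where
  "northeast m A \<longleftrightarrow>
     (\<forall>r c. in_partition m A (r, c) \<and> r > c \<longrightarrow> in_partition m A (c, r))"

end

theory Submission imports Defs begin

text \<open>Write \<open>P = \<alpha>\<^sub>+\<close> and \<open>Q = [2m] - P\<close>, with \<open>q\<^sub>0 < \<dots> < q\<^sub>m\<^sub>-\<^sub>1\<close> the elements of \<open>Q\<close>.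
  Since \<open>\<alpha>\<close> and its complement in \<open>\<langle>2m\<rangle>\<close> are both symmetric, the right steps of the lattice
  path for \<open>-q\<^sub>j\<close> and \<open>q\<^sub>j\<close> are the \<open>(m-j)\<close>-th and \<open>(m+j+1)\<close>-th ones, at heights
  \<open>m - #{p \<in> P. p < q\<^sub>j}\<close> and \<open>m + #{p \<in> P. p < q\<^sub>j}\<close>.  Hence box \<open>(m+j+1, m-j)\<close> lies in the
  partition iff \<open>j < #{p \<in> P. p < q\<^sub>j}\<close>, and its transpose iff \<open>#{p \<in> P. p < q\<^sub>j} \<le> j\<close>: the
  Northeast condition forces \<open>#{p \<in> P. p < q\<^sub>j} \<le> j\<close> for all \<open>j\<close>.  So \<open>Q\<close> never falls behind
  \<open>P\<close>, i.e. \<open>2 #{p \<in> P. p \<le> a} \<le> a\<close> for every \<open>a\<close>; at \<open>a = \<alpha>\<^sub>i\<close> this reads \<open>2i \<le> \<alpha>\<^sub>i\<close>.\<close>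

lemma sorted_list_of_set_nth_mem: "finite S \<Longrightarrow> k < card S \<Longrightarrow> sorted_list_of_set S ! k \<in> S"
  by (metis length_sorted_list_of_set nth_mem set_sorted_list_of_set)

lemma card_less_sorted_list_of_set_nth:
  fixes S :: "'a::linorder set"
  assumes "finite S" "k < card S"
  shows "card {s \<in> S. s < sorted_list_of_set S ! k} = k"
proof -
  define xs where "xs = sorted_list_of_set S"
  have len: "length xs = card S" and set: "set xs = S" and sorted: "sorted_wrt (<) xs"
    unfolding xs_def using assms(1) by simp_all
  have less_iff: "xs ! i < xs ! j \<longleftrightarrow> i < j" if "i < length xs" "j < length xs" for i j
    using sorted that by (metis linorder_neqE_nat not_less_iff_gr_or_eq sorted_wrt_nth_less)
  have "{s \<in> S. s < xs ! k} = (!) xs ` {..<k}"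
  proof
    show "{s \<in> S. s < xs ! k} \<subseteq> (!) xs ` {..<k}"
      using assms(2) len set less_iff by (auto simp: in_set_conv_nth)
    show "(!) xs ` {..<k} \<subseteq> {s \<in> S. s < xs ! k}"
      using assms(2) len set less_iff by auto
  qed
  moreover have "inj_on ((!) xs) {..<k}"
    using assms(2) len less_iff by (intro inj_onI) (metis lessThan_iff less_trans nat_neq_iff)
  ultimately show ?thesis unfolding xs_def by (simp add: card_image)
qed

lemma sorted_list_of_set_nth_card_less:
  fixes S :: "'a::linorder set"
  assumes "finite S" "y \<in> S"
  shows "sorted_list_of_set S ! card {s \<in> S. s < y} = y"
proof -
  obtain k where "k < card S" "sorted_list_of_set S ! k = y"
    using assms by (metis in_set_conv_nth length_sorted_list_of_set set_sorted_list_of_set)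
  then show ?thesis using card_less_sorted_list_of_set_nth[OF assms(1)] by metis
qed

lemma card_less_add_card_greater:
  fixes S :: "'a::linorder set"
  assumes "finite S"
  shows "card {s \<in> S. s < y} + card {s \<in> S. y < s} = card (S - {y})"
proof -
  have "S - {y} = {s \<in> S. s < y} \<union> {s \<in> S. y < s}" by (auto simp: neq_iff)
  moreover have "card ({s \<in> S. s < y} \<union> {s \<in> S. y < s}) = card {s \<in> S. s < y} + card {s \<in> S. y < s}"
    using assms by (intro card_Un_disjoint) auto
  ultimately show ?thesis by simp
qed

lemma weight_zero_Diff: "weight_zero A \<Longrightarrow> weight_zero B \<Longrightarrow> weight_zero (A - B)"
  unfolding weight_zero_def by (metis Diff_iff minus_minus)

lemma weight_zero_signed_alph: "weight_zero (signed_alph m)"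
  unfolding weight_zero_def signed_alph_def by auto

lemma zero_notin_signed_alph: "0 \<notin> signed_alph m"
  unfolding signed_alph_def by auto

lemma finite_signed_alph: "finite (signed_alph m)"
  unfolding signed_alph_def by simp

lemma weight_zero_eq_pos_part_Un:
  assumes "weight_zero A" "0 \<notin> A"
  shows "A = pos_part A \<union> uminus ` pos_part A"
proof -
  have "x \<in> uminus ` pos_part A" if "x \<in> A" "\<not> 0 < x" for x
  proof -
    have "x \<noteq> 0" using assms(2) that(1) by blast
    then show ?thesis using assms(1) that unfolding weight_zero_def pos_part_def
      by (intro image_eqI[of _ _ "-x"]) auto
  qed
  then show ?thesis using assms unfolding weight_zero_def pos_part_def by auto
qed

lemma card_Un_uminus_image:
  fixes S :: "int set"
  assumes "finite S" "\<forall>s\<in>S. 0 < s"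
  shows "card (S \<union> uminus ` S) = 2 * card S"
proof -
  have "S \<inter> uminus ` S = {}" using assms(2) by (auto simp: disjoint_iff) (metis neg_0_less_iff_less not_less_iff_gr_or_eq)
  then show ?thesis using assms(1) by (simp add: card_Un_disjoint card_image)
qed

lemma card_symmetric_less_neg:
  fixes S :: "int set"
  assumes "T = S \<union> uminus ` S" "\<forall>s\<in>S. 0 < s" "0 \<le> y"
  shows "card {x \<in> T. x < -y} = card {s \<in> S. y < s}"
proof -
  have "{x \<in> T. x < -y} = uminus ` {s \<in> S. y < s}"
    unfolding assms(1) using assms(2,3) by force
  then show ?thesis by (simp add: card_image)
qed

lemma card_symmetric_less_pos:
  fixes S :: "int set"
  assumes "T = S \<union> uminus ` S" "finite S" "\<forall>s\<in>S. 0 < s" "0 < y"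
  shows "card {x \<in> T. x < y} = card S + card {s \<in> S. s < y}"
proof -
  have "{x \<in> T. x < y} = uminus ` S \<union> {s \<in> S. s < y}"
    unfolding assms(1) using assms(3,4) by force
  moreover have "uminus ` S \<inter> {s \<in> S. s < y} = {}"
    using assms(3) by (auto simp: disjoint_iff) (metis neg_0_less_iff_less not_less_iff_gr_or_eq)
  ultimately show ?thesis using assms(2) by (simp add: card_Un_disjoint card_image)
qed

locale weight_zero_subset =
  fixes m :: nat and \<alpha> :: "int set"
  assumes subset: "\<alpha> \<subseteq> signed_alph m"
    and card_alpha: "card \<alpha> = 2 * m"
    and weight_zero: "weight_zero \<alpha>"
begin

abbreviation pos :: "int set" where "pos \<equiv> pos_part \<alpha>"

abbreviation gaps :: "int set" where "gaps \<equiv> {1..2 * int m} - pos"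

abbreviation missing :: "int set" where "missing \<equiv> signed_alph m - \<alpha>"

lemma pos_subset: "pos \<subseteq> {1..2 * int m}"
  using subset unfolding pos_part_def signed_alph_def by auto

lemma finite_pos: "finite pos"
  using pos_subset finite_subset by blast

lemma pos_positive: "\<forall>p\<in>pos. 0 < p"
  unfolding pos_part_def by simp

lemma gaps_positive: "\<forall>q\<in>gaps. 0 < q"
  by simp

lemma alpha_eq: "\<alpha> = pos \<union> uminus ` pos"
  by (rule weight_zero_eq_pos_part_Un[OF weight_zero]) (use subset zero_notin_signed_alph in blast)

lemma pos_part_missing: "pos_part missing = gaps"
  using subset unfolding pos_part_def signed_alph_def by auto

lemma missing_eq: "missing = gaps \<union> uminus ` gaps"
proof -
  have "missing = pos_part missing \<union> uminus ` pos_part missing"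
    by (rule weight_zero_eq_pos_part_Un[OF weight_zero_Diff[OF weight_zero_signed_alph weight_zero]])
      (simp add: zero_notin_signed_alph)
  then show ?thesis unfolding pos_part_missing .
qed

lemma card_pos: "card pos = m"
proof -
  have "card \<alpha> = card (pos \<union> uminus ` pos)" using alpha_eq by (rule arg_cong)
  then show ?thesis using card_alpha card_Un_uminus_image[OF finite_pos pos_positive] by simp
qed

lemma card_gaps: "card gaps = m"
  using card_Diff_subset[OF finite_pos pos_subset] card_pos by simp

lemma gaps_nth:
  assumes "j < m"
  shows "sorted_list_of_set gaps ! j \<in> gaps"
    and "card {q \<in> gaps. q < sorted_list_of_set gaps ! j} = j"
  using assms card_gaps
  by (intro sorted_list_of_set_nth_mem card_less_sorted_list_of_set_nth; simp)+

lemma missing_nth_neg_gap: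
  assumes "j < m"
  shows "sorted_list_of_set missing ! (m - Suc j) = - sorted_list_of_set gaps ! j"
proof -
  define y where "y = sorted_list_of_set gaps ! j"
  have y: "y \<in> gaps" "card {q \<in> gaps. q < y} = j"
    using gaps_nth[OF assms] unfolding y_def by simp_all
  have "card {q \<in> gaps. y < q} = m - Suc j"
    using card_less_add_card_greater[of gaps y] y card_gaps by simp
  then have "card {x \<in> missing. x < -y} = m - Suc j"
    using card_symmetric_less_neg[OF missing_eq gaps_positive, of y] y(1) by simp
  moreover have "-y \<in> missing" using y(1) missing_eq by blast
  ultimately show ?thesis
    using sorted_list_of_set_nth_card_less[of missing "-y"] finite_signed_alph by (simp add: y_def)
qed

lemma missing_nth_gap:
  assumes "j < m"
  shows "sorted_list_of_set missing ! (m + j) = sorted_list_of_set gaps ! j"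
proof -
  define y where "y = sorted_list_of_set gaps ! j"
  have y: "y \<in> gaps" "card {q \<in> gaps. q < y} = j"
    using gaps_nth[OF assms] unfolding y_def by simp_all
  then have "card {x \<in> missing. x < y} = m + j"
    using card_symmetric_less_pos[OF missing_eq _ gaps_positive, of y] card_gaps by simp
  moreover have "y \<in> missing" using y(1) missing_eq by blast
  ultimately show ?thesis
    using sorted_list_of_set_nth_card_less[of missing y] finite_signed_alph by (simp add: y_def)
qed

lemma northeast_card_pos_less_gap:
  assumes "northeast m \<alpha>" "j < m"
  shows "card {p \<in> pos. p < sorted_list_of_set gaps ! j} \<le> j"
proof -
  define y where "y = sorted_list_of_set gaps ! j"
  define k where "k = card {p \<in> pos. p < y}"
  have "y \<in> gaps" using gaps_nth[OF assms(2)] unfolding y_def by simp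
  then have "0 < y" "y \<notin> pos" by simp_all
  have split: "k + card {p \<in> pos. y < p} = m"
    using card_less_add_card_greater[OF finite_pos, of y] \<open>y \<notin> pos\<close> card_pos unfolding k_def by simp
  have card_alpha_less_neg: "card {x \<in> \<alpha>. x < -y} = card {p \<in> pos. y < p}"
    by (rule card_symmetric_less_neg[OF alpha_eq pos_positive]) (use \<open>0 < y\<close> in simp)
  have card_alpha_less: "card {x \<in> \<alpha>. x < y} = m + k"
    unfolding k_def card_pos[symmetric] by (rule card_symmetric_less_pos[OF alpha_eq finite_pos pos_positive \<open>0 < y\<close>])
  have "m - j - 1 = m - Suc j" "m + j + 1 - 1 = m + j" by simp_all
  then have nth_neg: "sorted_list_of_set missing ! (m - j - 1) = -y"
    and nth_pos: "sorted_list_of_set missing ! (m + j + 1 - 1) = y"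
    using missing_nth_neg_gap[OF assms(2)] missing_nth_gap[OF assms(2)] unfolding y_def by simp_all
  have "in_partition m \<alpha> (m + j + 1, m - j) \<longleftrightarrow> m + j + 1 + card {p \<in> pos. y < p} \<le> 2 * m"
    unfolding in_partition_def prod.case nth_neg card_alpha_less_neg using assms(2) by (auto simp: Suc_le_eq)
  also have "\<dots> \<longleftrightarrow> j < k" using split by linarith
  finally have below: "in_partition m \<alpha> (m + j + 1, m - j) \<longleftrightarrow> j < k" .
  have "in_partition m \<alpha> (m - j, m + j + 1) \<longleftrightarrow> m - j + (m + k) \<le> 2 * m"
    unfolding in_partition_def prod.case nth_pos card_alpha_less using assms(2) by (auto simp: Suc_le_eq)
  also have "\<dots> \<longleftrightarrow> k \<le> j" using assms(2) by linarith
  finally have above: "in_partition m \<alpha> (m - j, m + j + 1) \<longleftrightarrow> k \<le> j" .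
  have "k \<le> j"
  proof (rule ccontr)
    assume "\<not> k \<le> j"
    then have "in_partition m \<alpha> (m + j + 1, m - j)" using below by simp
    moreover have "m - j < m + j + 1" by simp
    ultimately have "in_partition m \<alpha> (m - j, m + j + 1)"
      using assms(1) unfolding northeast_def by blast
    with above \<open>\<not> k \<le> j\<close> show False by simp
  qed
  then show ?thesis unfolding k_def y_def .
qed

end

lemma double_card_le_if_gaps_ahead:
  fixes P :: "int set"
  assumes P: "P \<subseteq> {1..2 * int m}" "card P = m"
    and ahead: "\<forall>j<m. card {p \<in> P. p < sorted_list_of_set ({1..2 * int m} - P) ! j} \<le> j"
    and "0 \<le> a"
  shows "2 * int (card {p \<in> P. p \<le> a}) \<le> a"
proof (rule ccontr)
  define Q where "Q = {1..2 * int m} - P"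
  define k where "k = card {p \<in> P. p \<le> a}"
  assume "\<not> 2 * int (card {p \<in> P. p \<le> a}) \<le> a"
  then have a_lt: "a < 2 * int k" unfolding k_def by simp
  have fin: "finite P" "finite Q" using P(1) finite_subset unfolding Q_def by auto
  have "k \<le> m" unfolding k_def using card_mono[OF fin(1), of "{p \<in> P. p \<le> a}"] P(2) by auto
  have "nat a = card {1..a}" by simp
  also have "{1..a} = {p \<in> P. p \<le> a} \<union> {q \<in> Q. q \<le> a}"
    using P(1) a_lt \<open>k \<le> m\<close> unfolding Q_def by auto
  also have "card \<dots> = k + card {q \<in> Q. q \<le> a}"
    unfolding k_def using fin by (intro card_Un_disjoint) (simp_all, auto simp: Q_def)
  finally have "nat a = k + card {q \<in> Q. q \<le> a}" .
  define j where "j = card {q \<in> Q. q \<le> a}"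
  have "j < k" using \<open>nat a = k + card {q \<in> Q. q \<le> a}\<close> a_lt assms(4) unfolding j_def by linarith
  have "card Q = m" using card_Diff_subset[OF fin(1) P(1)] P(2) unfolding Q_def by simp
  define y where "y = sorted_list_of_set Q ! j"
  have y: "y \<in> Q" "card {q \<in> Q. q < y} = j"
    using card_less_sorted_list_of_set_nth[OF fin(2), of j] \<open>card Q = m\<close> \<open>j < k\<close> \<open>k \<le> m\<close> fin(2)
    by (simp_all add: y_def sorted_list_of_set_nth_mem)
  have "a < y"
  proof (rule ccontr)
    assume "\<not> a < y"
    then have "insert y {q \<in> Q. q < y} \<subseteq> {q \<in> Q. q \<le> a}" using y(1) by auto
    then have "card (insert y {q \<in> Q. q < y}) \<le> j" unfolding j_def using fin(2) by (intro card_mono) auto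
    then show False using y(2) fin(2) by simp
  qed
  then have "k \<le> card {p \<in> P. p < y}" unfolding k_def using fin(1) by (intro card_mono) auto
  also have "\<dots> \<le> j" using ahead \<open>j < k\<close> \<open>k \<le> m\<close> unfolding y_def Q_def by simp
  finally show False using \<open>j < k\<close> by simp
qed

lemma double_le_sorted_list_of_set_nth:
  fixes P :: "int set"
  assumes "finite P" "\<forall>a\<ge>0. 2 * int (card {p \<in> P. p \<le> a}) \<le> a" "\<forall>p\<in>P. 0 < p" "i < card P"
  shows "2 * int (Suc i) \<le> sorted_list_of_set P ! i"
proof -
  define a where "a = sorted_list_of_set P ! i"
  have "a \<in> P" using assms(1,4) unfolding a_def by (simp add: sorted_list_of_set_nth_mem)
  then have "{p \<in> P. p \<le> a} = insert a {p \<in> P. p < a}" by auto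
  then have "card {p \<in> P. p \<le> a} = Suc i"
    using card_less_sorted_list_of_set_nth[OF assms(1,4)] assms(1) unfolding a_def by simp
  then show ?thesis using assms(2,3) \<open>a \<in> P\<close> unfolding a_def by (metis less_le)
qed

lemma endpoints_if_double_le_nth:
  fixes P :: "int set"
  assumes "P \<subseteq> {1..2 * int m}" "card P = m" "1 \<le> m"
    and nth: "\<forall>i<m. 2 * int (Suc i) \<le> sorted_list_of_set P ! i"
  shows "1 \<notin> P" and "2 * int m \<in> P"
proof -
  let ?p = "sorted_list_of_set P"
  have fin: "finite P" using assms(1) finite_subset by blast
  show "1 \<notin> P"
  proof
    assume "1 \<in> P"
    moreover have "{p \<in> P. p < ?p ! 0} = {}"
      using card_less_sorted_list_of_set_nth[OF fin, of 0] assms(2,3) fin by simp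
    moreover have "2 \<le> ?p ! 0" using nth assms(3) by (auto dest: spec[of _ 0])
    ultimately show False by auto
  qed
  have "?p ! (m - 1) \<in> P" using assms(2,3) fin by (simp add: sorted_list_of_set_nth_mem)
  moreover have "2 * int m \<le> ?p ! (m - 1)" using nth assms(3) by (auto dest: spec[of _ "m - 1"])
  ultimately show "2 * int m \<in> P" using assms(1) by force
qed

theorem proposition5p4:
  fixes m :: nat and \<alpha> :: "int set"
  assumes "m \<ge> 1"
    and "\<alpha> \<subseteq> signed_alph m"
    and "card \<alpha> = 2 * m"
    and "weight_zero \<alpha>"
    and "northeast m \<alpha>"
  shows "(\<forall>i\<in>{1..m}. sorted_list_of_set (pos_part \<alpha>) ! (i - 1) \<ge> 2 * int i)
         \<and> 1 \<notin> pos_part \<alpha> \<and> 2 * int m \<in> pos_part \<alpha>"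
proof -
  interpret weight_zero_subset m \<alpha> using assms(2-4) by unfold_locales
  have "\<forall>a\<ge>0. 2 * int (card {p \<in> pos. p \<le> a}) \<le> a"
    using double_card_le_if_gaps_ahead[OF pos_subset card_pos] northeast_card_pos_less_gap[OF assms(5)]
    by blast
  then have nth: "\<forall>i<m. 2 * int (Suc i) \<le> sorted_list_of_set pos ! i"
    using double_le_sorted_list_of_set_nth[OF finite_pos _ pos_positive] card_pos by simp
  have "\<forall>i\<in>{1..m}. 2 * int i \<le> sorted_list_of_set pos ! (i - 1)"
  proof
    fix i assume "i \<in> {1..m}"
    then show "2 * int i \<le> sorted_list_of_set pos ! (i - 1)" using nth by (auto dest: spec[of _ "i - 1"])
  qed
  then show ?thesis using endpoints_if_double_le_nth[OF pos_subset card_pos assms(1) nth] by blast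
qed

end
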